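(* Let $k$ be a function assigning to each prime power $q$ a positive integer $k(q)$, and suppose $k(q)=o(q)$, i.e. $k(q)/q\to 0$ as $q\to\infty$ over prime powers. Then for every sufficiently large prime power $q$, writing $k=k(q)$, there exists a finite connected graph $G$ of order $2q^{2}+(1-k)q$ in which every vertex has degree either $q+1-k$ or $q$, and whose cop number satisfies $q+1-k\le c(G)\le q$.
   Context: Graphs are finite, simple and connected, and are considered reflexive: each vertex carries a loop, so that a player may stay on its vertex. The game of Cops and Robbers on a graph $G$ is played as follows. First, a set of $m$ cops each choose a vertex (several cops may choose the same vertex). Then the robber chooses a vertex. After that, the players alternate turns, the cops moving first. On the cops' turn, each cop either stays on its vertex or moves to an adjacent vertex. On the robber's turn, the robber either stays or moves to an adjacent vertex. Both sides have full information at all times. The cops win if, after finitely many rounds, some cop occupies the same vertex as the robber. The cop number $c(G)$ is the least $m$ such that $m$ cops have a strategy that wins against every robber strategy. The order of a graph is its number of vertices. *)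

theory Defs
  imports Main "HOL-Number_Theory.Prime_Powers"
begin

definition simple_graph :: "'a set \<Rightarrow> ('a \<Rightarrow> 'a \<Rightarrow> bool) \<Rightarrow> bool" where
  "simple_graph V E \<longleftrightarrow> finite V \<and> (\<forall>u v. E u v \<longrightarrow> u \<in> V \<and> v \<in> V)
     \<and> (\<forall>u v. E u v \<longrightarrow> E v u) \<and> (\<forall>u. \<not> E u u)"

definition connected_graph :: "'a set \<Rightarrow> ('a \<Rightarrow> 'a \<Rightarrow> bool) \<Rightarrow> bool" where
  "connected_graph V E \<longleftrightarrow> V \<noteq> {} \<and> (\<forall>u\<in>V. \<forall>v\<in>V. E\<^sup>*\<^sup>* u v)"

definition degree :: "'a set \<Rightarrow> ('a \<Rightarrow> 'a \<Rightarrow> bool) \<Rightarrow> 'a \<Rightarrow> nat" where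
  "degree V E u = card {v \<in> V. E u v}"

definition step_ok :: "('a \<Rightarrow> 'a \<Rightarrow> bool) \<Rightarrow> 'a \<Rightarrow> 'a \<Rightarrow> bool" where
  "step_ok E u v \<longleftrightarrow> u = v \<or> E u v"

definition valid_config :: "'a set \<Rightarrow> nat \<Rightarrow> (nat \<Rightarrow> 'a) \<Rightarrow> bool" where
  "valid_config V m C \<longleftrightarrow> (\<forall>i<m. C i \<in> V)"

text \<open>Cop strategy: given the history of cop configurations and robber positions
  (both of the same length n), returns the next cop configuration
  (for n = 0 the initial placement).  Robber strategy: given the cop history of
  length n+1 and robber history of length n, returns the robber's next position
  (for n = 0 the initial choice).\<close>

definition legal_cop_strategy ::
  "'a set \<Rightarrow> ('a \<Rightarrow> 'a \<Rightarrow> bool) \<Rightarrow> nat \<Rightarrow> ((nat \<Rightarrow> 'a) list \<Rightarrow> 'a list \<Rightarrow> (nat \<Rightarrow> 'a)) \<Rightarrow> bool" where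
  "legal_cop_strategy V E m sc \<longleftrightarrow>
     valid_config V m (sc [] []) \<and>
     (\<forall>Cs Rs. Cs \<noteq> [] \<and> valid_config V m (last Cs) \<longrightarrow>
        valid_config V m (sc Cs Rs) \<and> (\<forall>i<m. step_ok E (last Cs i) (sc Cs Rs i)))"

definition legal_robber_strategy ::
  "'a set \<Rightarrow> ('a \<Rightarrow> 'a \<Rightarrow> bool) \<Rightarrow> ((nat \<Rightarrow> 'a) list \<Rightarrow> 'a list \<Rightarrow> 'a) \<Rightarrow> bool" where
  "legal_robber_strategy V E sr \<longleftrightarrow>
     (\<forall>Cs. sr Cs [] \<in> V) \<and>
     (\<forall>Cs Rs. Rs \<noteq> [] \<and> last Rs \<in> V \<longrightarrow> sr Cs Rs \<in> V \<and> step_ok E (last Rs) (sr Cs Rs))"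

text \<open>History after round n: n+1 cop configurations and n+1 robber positions.\<close>
fun game_hist ::
  "((nat \<Rightarrow> 'a) list \<Rightarrow> 'a list \<Rightarrow> (nat \<Rightarrow> 'a)) \<Rightarrow> ((nat \<Rightarrow> 'a) list \<Rightarrow> 'a list \<Rightarrow> 'a)
     \<Rightarrow> nat \<Rightarrow> (nat \<Rightarrow> 'a) list \<times> 'a list" where
  "game_hist sc sr 0 = (let c0 = sc [] [] in ([c0], [sr [c0] []]))"
| "game_hist sc sr (Suc n) = (let (Cs, Rs) = game_hist sc sr n; c = sc Cs Rs; Cs' = Cs @ [c]
                               in (Cs', Rs @ [sr Cs' Rs]))"

definition cop_pos where "cop_pos sc sr t = fst (game_hist sc sr t) ! t"
definition rob_pos where "rob_pos sc sr t = snd (game_hist sc sr t) ! t"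

text \<open>Capture: at time t the robber (after choosing/moving) shares a vertex with a cop,
  or a cop moves onto the robber in the next cops' turn.\<close>
definition captured :: "nat \<Rightarrow> ((nat \<Rightarrow> 'a) list \<Rightarrow> 'a list \<Rightarrow> (nat \<Rightarrow> 'a))
     \<Rightarrow> ((nat \<Rightarrow> 'a) list \<Rightarrow> 'a list \<Rightarrow> 'a) \<Rightarrow> bool" where
  "captured m sc sr \<longleftrightarrow> (\<exists>t. \<exists>i<m. cop_pos sc sr t i = rob_pos sc sr t
                                     \<or> cop_pos sc sr (Suc t) i = rob_pos sc sr t)"

definition cops_win :: "'a set \<Rightarrow> ('a \<Rightarrow> 'a \<Rightarrow> bool) \<Rightarrow> nat \<Rightarrow> bool" where
  "cops_win V E m \<longleftrightarrow> (\<exists>sc. legal_cop_strategy V E m sc \<and>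
      (\<forall>sr. legal_robber_strategy V E sr \<longrightarrow> captured m sc sr))"

definition cop_number :: "'a set \<Rightarrow> ('a \<Rightarrow> 'a \<Rightarrow> bool) \<Rightarrow> nat" where
  "cop_number V E = (LEAST m. cops_win V E m)"

end

theory Submission
  imports Defs "HOL-Algebra.Algebraic_Closure" "HOL-Number_Theory.Residues"
begin

text \<open>
  Let \<open>s = q + 1 - k\<close>. Take the points of the affine plane over the field with \<open>q\<close> elements and
  the lines of \<open>s\<close> of its \<open>q\<close> non-vertical slopes, joined by incidence: there are
  \<open>q\<^sup>2 + s q\<close> vertices, points have degree \<open>s\<close> and lines degree \<open>q\<close>. The graph is bipartite and
  two points lie on at most one common line, so it has girth at least five. By the argument of
  Aigner and Fromme a robber with at least \<open>s\<close> neighbours escapes fewer than \<open>s\<close> cops, since each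
  cop guards at most one of these neighbours. On the other hand \<open>q\<close> cops on the \<open>q\<close> lines of slope
  0 catch the robber within two rounds. The hypothesis \<open>k(q) = o(q)\<close> only serves to make \<open>s \<ge> 2\<close>.

  The field with \<open>q = p\<^sup>n\<close> elements is the set of fixed points of \<open>x \<mapsto> x\<^sup>q\<close> in an algebraic
  closure of \<open>\<int>/p\<close>; it has exactly \<open>q\<close> elements because \<open>X\<^sup>q - X\<close> has no repeated roots.
\<close>

section \<open>The Frobenius map\<close>

context cring begin

lemma add_pow_binomial:
  assumes x: "x \<in> carrier R" and y: "y \<in> carrier R"
  shows "(x \<oplus> y) [^] n = (\<Oplus>k\<in>{..n}. [(n choose k)] \<cdot> (x [^] k \<otimes> y [^] (n - k)))"
proof (induction n)
  case 0
  then show ?case using x y by simp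
next
  case (Suc n)
  define T where "T k = x [^] k \<otimes> y [^] (Suc n - k)" for k
  have T: "T k \<in> carrier R" for k using x y by (simp add: T_def)
  define S where "S c = (\<Oplus>i\<in>{..n}. [c i] \<cdot> T (Suc i))" for c :: "nat \<Rightarrow> nat"
  have S: "S c \<in> carrier R" for c using T by (simp add: S_def)
  have "x \<otimes> (x \<oplus> y) [^] n = (\<Oplus>i\<in>{..n}. x \<otimes> ([(n choose i)] \<cdot> (x [^] i \<otimes> y [^] (n - i))))"
    unfolding Suc.IH using x y by (intro finsum_rdistr) auto
  also have "\<dots> = S (\<lambda>i. n choose i)"
    unfolding S_def using x y
    by (intro finsum_cong') (auto simp: T_def add_pow_rdistr m_assoc[symmetric] Suc_diff_le
        nat_pow_Suc2[symmetric] simp del: nat_pow_Suc2)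
  finally have xpart: "x \<otimes> (x \<oplus> y) [^] n = S (\<lambda>i. n choose i)" .
  have "y \<otimes> (x \<oplus> y) [^] n = (\<Oplus>k\<in>{..n}. y \<otimes> ([(n choose k)] \<cdot> (x [^] k \<otimes> y [^] (n - k))))"
    unfolding Suc.IH using x y by (intro finsum_rdistr) auto
  also have "\<dots> = (\<Oplus>k\<in>{..n}. [(n choose k)] \<cdot> T k)"
    using x y by (intro finsum_cong') (auto simp: T_def add_pow_rdistr m_ac Suc_diff_le)
  also have "\<dots> = (\<Oplus>k\<in>{..Suc n}. [(n choose k)] \<cdot> T k)"
    using T by (simp add: finsum_Suc binomial_eq_0)
  also have "\<dots> = S (\<lambda>i. n choose Suc i) \<oplus> [(n choose 0)] \<cdot> T 0"
    using T unfolding S_def by (subst finsum_Suc2) auto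
  finally have ypart: "y \<otimes> (x \<oplus> y) [^] n = S (\<lambda>i. n choose Suc i) \<oplus> [(n choose 0)] \<cdot> T 0" .
  have pascal: "S (\<lambda>i. Suc n choose Suc i) = S (\<lambda>i. n choose i) \<oplus> S (\<lambda>i. n choose Suc i)"
    using T by (simp add: S_def add.nat_pow_mult finsum_addf[symmetric])
  have "(x \<oplus> y) [^] Suc n = x \<otimes> (x \<oplus> y) [^] n \<oplus> y \<otimes> (x \<oplus> y) [^] n"
    using x y by (simp add: m_comm l_distr)
  also have "\<dots> = S (\<lambda>i. Suc n choose Suc i) \<oplus> [(Suc n choose 0)] \<cdot> T 0"
    unfolding xpart ypart pascal using S T by (simp add: a_assoc)
  also have "\<dots> = (\<Oplus>k\<in>{..Suc n}. [(Suc n choose k)] \<cdot> T k)"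
    using T unfolding S_def by (subst finsum_Suc2) auto
  finally show ?case by (simp add: T_def)
qed

lemma add_pow_char_mult:
  assumes char: "[(p::nat)] \<cdot> \<one> = \<zero>" and t: "t \<in> carrier R" and pk: "p dvd k"
  shows "[k] \<cdot> t = \<zero>"
proof -
  obtain m where k: "k = p * m" using pk by blast
  have "[p] \<cdot> t = ([p] \<cdot> \<one>) \<otimes> t" using t add_pow_ldistr[of \<one> t p] by simp
  then have "[p] \<cdot> t = \<zero>" using char t by simp
  then show ?thesis unfolding k using t add.nat_pow_pow[of t m p] by simp
qed

lemma add_pow_char_prime:
  assumes p: "Factorial_Ring.prime (p::nat)" and char: "[p] \<cdot> \<one> = \<zero>" and x: "x \<in> carrier R" and y: "y \<in> carrier R"
  shows "(x \<oplus> y) [^] p = x [^] p \<oplus> y [^] p"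
proof -
  define f where "f k = [(p choose k)] \<cdot> (x [^] k \<otimes> y [^] (p - k))" for k
  have f: "f k \<in> carrier R" for k using x y by (simp add: f_def)
  obtain r where r: "p = Suc (Suc r)" using prime_ge_2_nat[OF p] by (metis add_2_eq_Suc le_Suc_ex)
  have middle: "f (Suc i) = \<zero>" if "i \<in> {..r}" for i
    unfolding f_def using that r x y
    by (intro add_pow_char_mult[OF char] dvd_choose_prime[OF _ _ _ p]) auto
  have "(x \<oplus> y) [^] p = (\<Oplus>k\<in>{..Suc (Suc r)}. f k)"
    unfolding f_def r by (rule add_pow_binomial[OF x y])
  also have "\<dots> = f p \<oplus> (\<Oplus>k\<in>{..Suc r}. f k)"
    unfolding r by (rule finsum_Suc) (use f in auto)
  also have "(\<Oplus>k\<in>{..Suc r}. f k) = (\<Oplus>i\<in>{..r}. f (Suc i)) \<oplus> f 0"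
    by (rule finsum_Suc2) (use f in auto)
  also have "(\<Oplus>i\<in>{..r}. f (Suc i)) = \<zero>"
    using middle by (intro add.finprod_one_eqI)
  finally show ?thesis using x y by (simp add: f_def)
qed

lemma add_pow_char_prime_power:
  assumes p: "Factorial_Ring.prime (p::nat)" and char: "[p] \<cdot> \<one> = \<zero>" and x: "x \<in> carrier R" and y: "y \<in> carrier R"
  shows "(x \<oplus> y) [^] (p ^ n) = x [^] (p ^ n) \<oplus> y [^] (p ^ n)"
proof (induction n)
  case (Suc n)
  have "(x \<oplus> y) [^] (p ^ Suc n) = ((x \<oplus> y) [^] (p ^ n)) [^] p"
    using x y by (simp add: nat_pow_pow mult.commute)
  also have "\<dots> = (x [^] (p ^ n)) [^] p \<oplus> (y [^] (p ^ n)) [^] p"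
    using Suc x y by (simp add: add_pow_char_prime[OF p char])
  finally show ?case using x y by (simp add: nat_pow_pow mult.commute)
qed (use x y in simp)

lemma a_inv_pow_char_prime_power:
  assumes p: "Factorial_Ring.prime (p::nat)" and char: "[p] \<cdot> \<one> = \<zero>" and x: "x \<in> carrier R"
  shows "(\<ominus> x) [^] (p ^ n) = \<ominus> (x [^] (p ^ n))"
proof -
  have "(\<ominus> x) [^] (p ^ n) \<oplus> x [^] (p ^ n) = (\<ominus> x \<oplus> x) [^] (p ^ n)"
    using add_pow_char_prime_power[OF p char, of "\<ominus> x" x n] x by simp
  also have "\<dots> = \<zero>" using x p by (simp add: l_neg nat_pow_zero prime_gt_0_nat)
  finally show ?thesis using x by (simp add: minus_equality)
qed

end

section \<open>Finite fields in algebraically closed fields\<close>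

definition (in ring) trinomial :: "nat \<Rightarrow> 'a \<Rightarrow> 'a \<Rightarrow> 'a list" where
  "trinomial N b c = \<one> # replicate (N - 2) \<zero> @ [b, c]"

lemma (in domain) trinomial_carrier:
  "b \<in> carrier R \<Longrightarrow> c \<in> carrier R \<Longrightarrow> trinomial N b c \<in> carrier (poly_ring R)"
  unfolding trinomial_def univ_poly_carrier[symmetric] by (intro polynomialI) auto

lemma (in ring) degree_trinomial: "N \<ge> 2 \<Longrightarrow> degree (trinomial N b c) = N"
  by (simp add: trinomial_def)

lemma (in ring) eval_trinomial:
  assumes N: "N \<ge> 2" and b: "b \<in> carrier R" and c: "c \<in> carrier R" and x: "x \<in> carrier R"
  shows "eval (trinomial N b c) x = x [^] N \<oplus> b \<otimes> x \<oplus> c"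
proof -
  have "eval (trinomial N b c) x = \<one> \<otimes> x [^] N \<oplus> eval (replicate (N - 2) \<zero> @ [b, c]) x"
    unfolding trinomial_def eval.simps(2) degree_trinomial[OF N, unfolded trinomial_def] by simp
  also have "eval (replicate (N - 2) \<zero> @ [b, c]) x = b \<otimes> x \<oplus> c"
    using b c x by (subst eval_replicate) auto
  finally show ?thesis using b c x by (simp add: a_assoc)
qed

lemma (in ring) eval_trinomial_pow_minus_id:
  "N \<ge> 2 \<Longrightarrow> x \<in> carrier R \<Longrightarrow> eval (trinomial N (\<ominus> \<one>) \<zero>) x = x [^] N \<ominus> x"
  by (simp add: eval_trinomial a_minus_def l_minus)

context algebraically_closed begin

lemma has_root:
  assumes P: "P \<in> carrier (poly_ring L)" and deg: "degree P \<ge> 1"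
  shows "\<exists>x\<in>carrier L. eval P x = \<zero>"
proof -
  have "roots P \<noteq> {#}"
    using roots_over_carrier[OF P] deg by (auto simp: splitted_def)
  then obtain x where "x \<in># roots P" by blast
  then show ?thesis using roots_mem_iff_is_root[OF P] by (auto simp: is_root_def)
qed

lemma infinite_carrier: "infinite (carrier L)"
proof
  assume fin: "finite (carrier L)"
  define N where "N = card (carrier L)"
  have "card {\<zero>, \<one>} \<le> N" unfolding N_def using fin by (intro card_mono) auto
  then have N: "N \<ge> 2" by simp
  have Units: "card (Units L) = N - 1"
    using fin by (simp add: field_Units N_def card_Diff_singleton)
  have fermat: "x [^] N = x" if x: "x \<in> carrier L" for x
  proof (cases "x = \<zero>")
    case True
    then show ?thesis using N by (simp add: nat_pow_zero)
  next
    case False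
    then have "x [^] (N - 1) = \<one>"
      using units_power_order_eq_one[of x] fin x Units by (simp add: field_Units)
    moreover have "x [^] N = x [^] (N - 1) \<otimes> x"
      using N x nat_pow_Suc[of x "N - 1"] by (simp add: Suc_diff_le)
    ultimately show ?thesis using x by simp
  qed
  obtain x where x: "x \<in> carrier L" "eval (trinomial N (\<ominus> \<one>) \<one>) x = \<zero>"
    using has_root[OF trinomial_carrier, of "\<ominus> \<one>" \<one> N] degree_trinomial[OF N, of "\<ominus> \<one>" \<one>] N by auto
  moreover have "eval (trinomial N (\<ominus> \<one>) \<one>) x = \<one>"
    using eval_trinomial[OF N] fermat x by (simp add: l_minus r_neg)
  ultimately show False by simp
qed

end

lemma (in cring) square_factor_cancel:
  assumes d: "d \<in> carrier R" and h: "h \<in> carrier R" and q: "(q::nat) \<ge> 1"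
    and eq: "d [^] q \<ominus> d = d [^] (2::nat) \<otimes> h"
  shows "d \<otimes> (d [^] (q - 1) \<ominus> \<one> \<ominus> d \<otimes> h) = \<zero>"
proof -
  have "d \<otimes> (e \<ominus> \<one> \<ominus> d \<otimes> h) = e \<otimes> d \<ominus> d \<ominus> d [^] (2::nat) \<otimes> h" if "e \<in> carrier R" for e
    using that d h by (simp add: numeral_2_eq_2) algebra
  moreover have "d [^] (q - 1) \<otimes> d = d [^] q"
    using d q nat_pow_Suc[of d "q - 1"] by (simp add: Suc_diff_le)
  ultimately show ?thesis using eq d h by simp
qed

lemma (in algebraically_closed) poly_vanishing_off_point:
  assumes M: "M \<in> carrier (poly_ring L)" and vanish: "\<And>x. x \<in> carrier L \<Longrightarrow> x \<noteq> a \<Longrightarrow> eval M x = \<zero>"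
  shows "M = []"
proof (rule ccontr)
  assume "M \<noteq> []"
  then have "carrier L \<subseteq> insert a {x. is_root M x}" using vanish by (auto simp: is_root_def)
  then show False using finite_number_of_roots[OF M] infinite_carrier finite_subset by blast
qed

locale alg_closed_field_char = algebraically_closed R for R (structure) +
  fixes p :: nat
  assumes prime_p: "Factorial_Ring.prime p" and char_p: "[p] \<cdot> \<one> = \<zero>"
begin

definition frobenius_fixed :: "nat \<Rightarrow> 'a set" where
  "frobenius_fixed n = {x \<in> carrier R. x [^] (p ^ n) = x}"

lemma frobenius_fixed_subring: "subring (frobenius_fixed n) R"
  unfolding frobenius_fixed_def
  by (rule subringI)
    (auto simp: nat_pow_distrib add_pow_char_prime_power[OF prime_p char_p]
      a_inv_pow_char_prime_power[OF prime_p char_p])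

lemma prime_power_ge_2: "n \<ge> 1 \<Longrightarrow> p ^ n \<ge> 2"
  using prime_ge_2_nat[OF prime_p] self_le_power[of p n] by simp

lemma frobenius_shift:
  assumes x: "x \<in> carrier R" and a: "a \<in> carrier R" and aq: "a [^] (p ^ n) = a"
  shows "(x \<ominus> a) [^] (p ^ n) \<ominus> (x \<ominus> a) = x [^] (p ^ n) \<ominus> x"
proof -
  have "(x \<ominus> a) [^] (p ^ n) = x [^] (p ^ n) \<ominus> a"
    using x a aq add_pow_char_prime_power[OF prime_p char_p x, of "\<ominus> a" n]
      a_inv_pow_char_prime_power[OF prime_p char_p a, of n]
    by (simp add: a_minus_def)
  moreover have "(e \<ominus> a) \<ominus> (x \<ominus> a) = e \<ominus> x" if "e \<in> carrier R" for e
    using that x a by algebra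
  ultimately show ?thesis using x by simp
qed

text \<open>As \<open>X\<^sup>q - X = (X - a)\<^sup>q - (X - a)\<close>, a factorisation \<open>X\<^sup>q - X = (X - a)\<^sup>2 H\<close> would make
  \<open>(X - a)\<^sup>q\<^sup>-\<^sup>1 - 1 - (X - a) H\<close> vanish everywhere except at \<open>a\<close>.\<close>

lemma frobenius_no_square_factor:
  assumes n: "n \<ge> 1" and a: "a \<in> carrier R" and H: "H \<in> carrier (poly_ring R)"
    and factor: "\<And>x. x \<in> carrier R \<Longrightarrow> x [^] (p ^ n) \<ominus> x = (x \<ominus> a) [^] (2::nat) \<otimes> eval H x"
  shows False
proof -
  define q where "q = p ^ n"
  have q: "q \<ge> 2" unfolding q_def using prime_power_ge_2[OF n] .
  define PR where "PR = poly_ring R"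
  interpret PR: cring PR unfolding PR_def by (rule univ_poly_is_cring[OF carrier_is_subring])
  have H': "H \<in> carrier PR" using H by (simp add: PR_def)
  have h: "eval H x \<in> carrier R" if "x \<in> carrier R" for x
    using H that unfolding univ_poly_carrier[symmetric]
    by (intro eval_poly_in_carrier) (auto intro: carrier_is_subring)
  have "(a \<ominus> a) [^] (2::nat) \<otimes> eval H a = \<zero>" using a h[OF a] by (simp add: a_minus_def r_neg nat_pow_zero)
  then have aq: "a [^] q = a" using factor[OF a] a by (simp add: q_def)
  have shift: "(x \<ominus> a) [^] q \<ominus> (x \<ominus> a) = x [^] q \<ominus> x" if "x \<in> carrier R" for x
    unfolding q_def by (rule frobenius_shift[OF that a aq[unfolded q_def]])
  define D where "D = [\<one>, \<ominus> a]"
  have D: "D \<in> carrier PR"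
    unfolding D_def PR_def univ_poly_carrier[symmetric] using a by (intro polynomialI) auto
  have evD: "eval D x = x \<ominus> a" if "x \<in> carrier R" for x
    using that a by (simp add: D_def a_minus_def a_comm)
  define M where "M = D [^]\<^bsub>PR\<^esub> (q - 1) \<ominus>\<^bsub>PR\<^esub> \<one>\<^bsub>PR\<^esub> \<ominus>\<^bsub>PR\<^esub> D \<otimes>\<^bsub>PR\<^esub> H"
  have M: "M \<in> carrier PR" unfolding M_def using D H' by simp
  have evM: "eval M x = (x \<ominus> a) [^] (q - 1) \<ominus> \<one> \<ominus> (x \<ominus> a) \<otimes> eval H x" if x: "x \<in> carrier R" for x
  proof -
    interpret ev: ring_hom_cring PR R "\<lambda>P. eval P x"
      unfolding PR_def by (rule eval_cring_hom[OF carrier_is_subring x])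
    show ?thesis unfolding M_def using D H' x
      by (simp add: ev.hom_sub ev.hom_mult ev.ring.hom_nat_pow evD)
  qed
  have "M = []"
  proof (rule poly_vanishing_off_point)
    show "M \<in> carrier (poly_ring R)" using M by (simp add: PR_def)
    fix x assume x: "x \<in> carrier R" and "x \<noteq> a"
    have "(x \<ominus> a) \<otimes> eval M x = \<zero>"
      unfolding evM[OF x] using square_factor_cancel[of "x \<ominus> a" "eval H x" q] shift[OF x] factor[OF x] x a h[OF x] q
      by (simp add: q_def)
    moreover have "x \<ominus> a \<noteq> \<zero>" using x a \<open>x \<noteq> a\<close> by simp
    moreover have "eval M x \<in> carrier R" using evM[OF x] h[OF x] x a by simp
    ultimately show "eval M x = \<zero>" using integral x a by blast
  qed
  moreover have "eval M a = \<ominus> \<one>"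
    using evM[OF a] a h[OF a] q by (simp add: nat_pow_zero a_minus_def r_neg)
  ultimately show False using add.inv_eq_1_iff by force
qed

lemma frobenius_trinomial_simple_roots:
  assumes n: "n \<ge> 1"
  shows "alg_mult (trinomial (p ^ n) (\<ominus> \<one>) \<zero>) a \<le> 1"
proof (rule ccontr)
  define P where "P = trinomial (p ^ n) (\<ominus> \<one>) \<zero>"
  define PR where "PR = poly_ring R"
  assume "\<not> alg_mult (trinomial (p ^ n) (\<ominus> \<one>) \<zero>) a \<le> 1"
  then have mult: "alg_mult P a \<ge> 2" by (simp add: P_def)
  have a: "a \<in> carrier R" using mult by (auto simp: alg_mult_def split: if_splits)
  have P: "P \<in> carrier PR" unfolding P_def PR_def by (simp add: trinomial_carrier)
  define D where "D = [\<one>, \<ominus> a]"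
  obtain H where H: "H \<in> carrier PR" and PH: "P = D [^]\<^bsub>PR\<^esub> (2::nat) \<otimes>\<^bsub>PR\<^esub> H"
    using le_alg_mult_imp_pdivides[OF a _ mult] P
    unfolding D_def PR_def pdivides_def by (auto elim!: dividesE)
  have D: "D \<in> carrier PR"
    unfolding D_def PR_def univ_poly_carrier[symmetric] using a by (intro polynomialI) auto
  have "x [^] (p ^ n) \<ominus> x = (x \<ominus> a) [^] (2::nat) \<otimes> eval H x" if x: "x \<in> carrier R" for x
  proof -
    interpret ev: ring_hom_cring PR R "\<lambda>P. eval P x"
      unfolding PR_def by (rule eval_cring_hom[OF carrier_is_subring x])
    have "eval P x = x [^] (p ^ n) \<ominus> x"
      unfolding P_def using x prime_power_ge_2[OF n] by (simp add: eval_trinomial_pow_minus_id)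
    moreover have "eval D x = x \<ominus> a" using x a by (simp add: D_def a_minus_def a_comm)
    ultimately show ?thesis using D H x by (simp add: PH)
  qed
  then show False using frobenius_no_square_factor[OF n a] H unfolding PR_def by blast
qed

lemma frobenius_fixed_card:
  assumes n: "n \<ge> 1"
  shows "finite (frobenius_fixed n)" and "card (frobenius_fixed n) = p ^ n"
proof -
  define P where "P = trinomial (p ^ n) (\<ominus> \<one>) \<zero>"
  have q: "p ^ n \<ge> 2" using prime_power_ge_2[OF n] .
  have P: "P \<in> carrier (poly_ring R)" by (simp add: P_def trinomial_carrier)
  have "P \<noteq> []" by (simp add: P_def trinomial_def)
  then have root_iff: "is_root P x \<longleftrightarrow> x \<in> frobenius_fixed n" for x
    by (auto simp: P_def is_root_def frobenius_fixed_def eval_trinomial_pow_minus_id[OF q])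
  show fin: "finite (frobenius_fixed n)"
    using finite_number_of_roots[OF P] root_iff by simp
  have "roots P = mset_set (frobenius_fixed n)"
  proof (rule multiset_eqI)
    fix a
    have "count (roots P) a \<le> 1"
      using frobenius_trinomial_simple_roots[OF n] alg_mult_eq_count_roots[OF P] by (simp add: P_def)
    moreover have "count (roots P) a > 0 \<longleftrightarrow> a \<in> frobenius_fixed n"
      using roots_mem_iff_is_root[OF P] root_iff by simp
    ultimately show "count (roots P) a = count (mset_set (frobenius_fixed n)) a"
      using fin by (cases "a \<in> frobenius_fixed n") (auto simp del: count_greater_zero_iff)
  qed
  then have "card (frobenius_fixed n) = degree P"
    using roots_over_carrier[OF P] by (simp add: splitted_def)
  then show "card (frobenius_fixed n) = p ^ n"
    using degree_trinomial[OF q, of "\<ominus> \<one>" \<zero>] by (simp add: P_def)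
qed

end

lemma (in ring_hom_ring) hom_add_pow_nat: "x \<in> carrier R \<Longrightarrow> h ([(k::nat)] \<cdot>\<^bsub>R\<^esub> x) = [k] \<cdot>\<^bsub>S\<^esub> h x"
  by (induction k) (auto simp: R.add.nat_pow_Suc S.add.nat_pow_Suc)

lemma alg_closed_field_char_exists:
  assumes p: "Factorial_Ring.prime p"
  shows "\<exists>L :: ((int list \<times> nat) multiset \<Rightarrow> int) ring. alg_closed_field_char L p"
proof -
  define Zp where "Zp = residue_ring (int p)"
  interpret Zp: residues_prime p Zp
    using p unfolding Zp_def by unfold_locales auto
  define L where "L = Zp.alg_closure"
  interpret L: algebraic_closure L "Zp.indexed_const ` carrier Zp"
    unfolding L_def by (rule Zp.alg_closureE(1))
  interpret h: ring_hom_ring Zp L Zp.indexed_const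
    unfolding L_def using Zp.alg_closureE(2)
    by (intro ring_hom_ringI2) (auto simp: Zp.ring_axioms L.ring_axioms[unfolded L_def])
  have "[k] \<cdot>\<^bsub>Zp\<^esub> \<one>\<^bsub>Zp\<^esub> = int k mod int p" for k :: nat
    by (induction k) (simp_all add: Zp.res_zero_eq Zp.add.nat_pow_Suc Zp.res_add_eq Zp.res_one_eq
        mod_add_right_eq add.commute)
  then have "[p] \<cdot>\<^bsub>Zp\<^esub> \<one>\<^bsub>Zp\<^esub> = \<zero>\<^bsub>Zp\<^esub>" by (simp add: Zp.res_zero_eq)
  then have "[p] \<cdot>\<^bsub>L\<^esub> \<one>\<^bsub>L\<^esub> = \<zero>\<^bsub>L\<^esub>" using h.hom_add_pow_nat[of "\<one>\<^bsub>Zp\<^esub>" p] by simp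
  then have "alg_closed_field_char L p" using p by unfold_locales
  then show ?thesis by blast
qed

section \<open>Line systems\<close>

text \<open>\<open>g m x b\<close> plays the role of \<open>m x + b\<close>, the ordinate at \<open>x\<close> of the line with slope \<open>m\<close> and
  intercept \<open>b\<close>: each point lies on exactly one line of each slope, and lines of different slopes
  meet exactly once.\<close>

definition line_system :: "'a set \<Rightarrow> ('a \<Rightarrow> 'a \<Rightarrow> 'a \<Rightarrow> 'a) \<Rightarrow> bool" where
  "line_system F g \<longleftrightarrow>
     (\<forall>m\<in>F. \<forall>x\<in>F. \<forall>b\<in>F. g m x b \<in> F) \<and>
     (\<forall>m\<in>F. \<forall>x\<in>F. \<forall>y\<in>F. \<exists>!b. b \<in> F \<and> g m x b = y) \<and>
     (\<forall>m\<in>F. \<forall>m'\<in>F. \<forall>b\<in>F. \<forall>b'\<in>F. m \<noteq> m' \<longrightarrow> (\<exists>!x. x \<in> F \<and> g m x b = g m' x b'))"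

lemma (in ring) subring_unique_intercept:
  assumes S: "subring S R" and mxy: "m \<in> S" "x \<in> S" "y \<in> S"
  shows "\<exists>!b. b \<in> S \<and> m \<otimes> x \<oplus> b = y"
proof
  have c: "m \<in> carrier R" "x \<in> carrier R" "y \<in> carrier R" using mxy subringE(1)[OF S] by auto
  show "y \<ominus> m \<otimes> x \<in> S \<and> m \<otimes> x \<oplus> (y \<ominus> m \<otimes> x) = y"
  proof
    show "y \<ominus> m \<otimes> x \<in> S" using mxy subringE[OF S] by (simp add: a_minus_def)
    show "m \<otimes> x \<oplus> (y \<ominus> m \<otimes> x) = y" using c by algebra
  qed
  show "b = y \<ominus> m \<otimes> x" if "b \<in> S \<and> m \<otimes> x \<oplus> b = y" for b
  proof -
    have "b \<in> carrier R" using that subringE(1)[OF S] by blast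
    then have "(m \<otimes> x \<oplus> b) \<ominus> m \<otimes> x = b" using c by algebra
    then show ?thesis using that by simp
  qed
qed

lemma (in domain) finite_subring_unique_meet:
  assumes S: "subring S R" and fin: "finite S"
    and in_S: "m \<in> S" "m' \<in> S" "b \<in> S" "b' \<in> S" and "m \<noteq> m'"
  shows "\<exists>!x. x \<in> S \<and> m \<otimes> x \<oplus> b = m' \<otimes> x \<oplus> b'"
proof -
  note closed = subringE[OF S]
  have carr: "x \<in> S \<Longrightarrow> x \<in> carrier R" for x using closed(1) by blast
  define d where "d = m \<ominus> m'"
  have c: "m \<in> carrier R" "m' \<in> carrier R" "b \<in> carrier R" "b' \<in> carrier R"
    using in_S carr by auto
  have d: "d \<in> S" "d \<in> carrier R" "d \<noteq> \<zero>"
    using in_S \<open>m \<noteq> m'\<close> closed c by (simp_all add: d_def) (simp add: a_minus_def)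
  have iff: "m \<otimes> x \<oplus> b = m' \<otimes> x \<oplus> b' \<longleftrightarrow> d \<otimes> x = b' \<ominus> b" if x: "x \<in> carrier R" for x
  proof -
    have "(m \<otimes> x \<oplus> b) \<ominus> (m' \<otimes> x \<oplus> b') = d \<otimes> x \<ominus> (b' \<ominus> b)"
      unfolding d_def using c x by algebra
    moreover have "m \<otimes> x \<oplus> b \<in> carrier R" "m' \<otimes> x \<oplus> b' \<in> carrier R"
      "d \<otimes> x \<in> carrier R" "b' \<ominus> b \<in> carrier R"
      using c d x by auto
    ultimately show ?thesis using r_right_minus_eq by metis
  qed
  have inj: "inj_on (\<lambda>x. d \<otimes> x) S"
    using d carr by (intro inj_onI) (simp add: m_lcancel)
  \<comment> \<open>multiplication by a nonzero element is injective on the finite set \<open>S\<close>, hence surjective\<close>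
  have "(\<lambda>x. d \<otimes> x) ` S = S"
    using d closed by (intro endo_inj_surj[OF fin _ inj]) auto
  moreover have "b' \<ominus> b \<in> S" using in_S closed by (simp add: a_minus_def)
  ultimately have "b' \<ominus> b \<in> (\<lambda>x. d \<otimes> x) ` S" by simp
  then obtain x where x: "x \<in> S" "d \<otimes> x = b' \<ominus> b" by (metis imageE)
  show ?thesis
  proof
    show "x \<in> S \<and> m \<otimes> x \<oplus> b = m' \<otimes> x \<oplus> b'" using x iff carr by blast
    show "x' = x" if "x' \<in> S \<and> m \<otimes> x' \<oplus> b = m' \<otimes> x' \<oplus> b'" for x'
      using that x iff carr inj_onD[OF inj, of x' x] by auto
  qed
qed

lemma (in domain) line_system_of_finite_subring:
  assumes S: "subring S R" and fin: "finite S"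
  shows "line_system S (\<lambda>m x b. m \<otimes> x \<oplus> b)"
  unfolding line_system_def
  using subringE[OF S] subring_unique_intercept[OF S] finite_subring_unique_meet[OF S fin] by auto

lemma bij_betw_Ex1_iff:
  assumes "bij_betw \<beta> A F"
  shows "(\<exists>!a. a \<in> A \<and> P (\<beta> a)) \<longleftrightarrow> (\<exists>!u. u \<in> F \<and> P u)"
  using assms unfolding bij_betw_def inj_on_def by blast

lemma line_system_transfer:
  assumes lines: "line_system F g" and \<beta>: "bij_betw \<beta> A F"
  shows "line_system A (\<lambda>m x b. inv_into A \<beta> (g (\<beta> m) (\<beta> x) (\<beta> b)))"
proof -
  have in_F: "\<beta> a \<in> F" if "a \<in> A" for a using \<beta> that by (auto simp: bij_betw_def)
  have g: "g m x b \<in> F" if "m \<in> F" "x \<in> F" "b \<in> F" for m x b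
    using lines that by (simp add: line_system_def)
  have inv: "inv_into A \<beta> u \<in> A" if "u \<in> F" for u
    using \<beta> that by (simp add: bij_betw_def inv_into_into)
  have inv_eq: "inv_into A \<beta> u = inv_into A \<beta> v \<longleftrightarrow> u = v" if "u \<in> F" "v \<in> F" for u v
    using \<beta> that by (metis bij_betw_inv_into_right)
  have inv_eq': "inv_into A \<beta> u = a \<longleftrightarrow> u = \<beta> a" if "u \<in> F" "a \<in> A" for u a
    using \<beta> that by (metis bij_betw_inv_into_left bij_betw_inv_into_right)
  show ?thesis
    unfolding line_system_def
  proof (intro conjI ballI impI)
    fix m x b assume "m \<in> A" "x \<in> A" "b \<in> A"
    then show "inv_into A \<beta> (g (\<beta> m) (\<beta> x) (\<beta> b)) \<in> A" by (simp add: in_F g inv)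
  next
    fix m x y assume "m \<in> A" "x \<in> A" "y \<in> A"
    then have "\<exists>!u. u \<in> F \<and> g (\<beta> m) (\<beta> x) u = \<beta> y"
      using lines in_F by (simp add: line_system_def)
    then show "\<exists>!b. b \<in> A \<and> inv_into A \<beta> (g (\<beta> m) (\<beta> x) (\<beta> b)) = y"
      using \<open>m \<in> A\<close> \<open>x \<in> A\<close> \<open>y \<in> A\<close>
        bij_betw_Ex1_iff[OF \<beta>, of "\<lambda>u. g (\<beta> m) (\<beta> x) u = \<beta> y"]
      by (simp add: in_F g inv_eq' cong: conj_cong)
  next
    fix m m' b b' assume "m \<in> A" "m' \<in> A" "b \<in> A" "b' \<in> A" "m \<noteq> m'"
    moreover have "\<beta> m \<noteq> \<beta> m'"
      using \<beta> \<open>m \<in> A\<close> \<open>m' \<in> A\<close> \<open>m \<noteq> m'\<close> by (auto simp: bij_betw_def dest: inj_onD)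
    ultimately have "\<exists>!u. u \<in> F \<and> g (\<beta> m) u (\<beta> b) = g (\<beta> m') u (\<beta> b')"
      using lines in_F by (simp add: line_system_def)
    then show "\<exists>!x. x \<in> A \<and> inv_into A \<beta> (g (\<beta> m) (\<beta> x) (\<beta> b)) = inv_into A \<beta> (g (\<beta> m') (\<beta> x) (\<beta> b'))"
      using \<open>m \<in> A\<close> \<open>m' \<in> A\<close> \<open>b \<in> A\<close> \<open>b' \<in> A\<close>
        bij_betw_Ex1_iff[OF \<beta>, of "\<lambda>u. g (\<beta> m) u (\<beta> b) = g (\<beta> m') u (\<beta> b')"]
      by (simp add: in_F g inv_eq cong: conj_cong)
  qed
qed

lemma prime_power_line_system:
  assumes "primepow (q :: nat)"
  shows "\<exists>g. line_system {..<q} g"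
proof -
  obtain p n :: nat where p: "Factorial_Ring.prime p" and "n > 0" and q: "q = p ^ n"
    using assms by (auto simp: primepow_def)
  then have n: "n \<ge> 1" by simp
  obtain L :: "((int list \<times> nat) multiset \<Rightarrow> int) ring" where "alg_closed_field_char L p"
    using alg_closed_field_char_exists[OF p] by blast
  then interpret L: alg_closed_field_char L p .
  define S where "S = L.frobenius_fixed n"
  have fin: "finite S" and card: "card S = q"
    unfolding S_def q using L.frobenius_fixed_card[OF n] by simp_all
  have "line_system S (\<lambda>m x b. m \<otimes>\<^bsub>L\<^esub> x \<oplus>\<^bsub>L\<^esub> b)"
    unfolding S_def by (rule L.line_system_of_finite_subring[OF L.frobenius_fixed_subring fin[unfolded S_def]])
  moreover obtain \<beta> where "bij_betw \<beta> {..<q} S"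
    using ex_bij_betw_nat_finite[OF fin] card by (auto simp: atLeast0LessThan)
  ultimately show ?thesis using line_system_transfer by blast
qed

section \<open>Cops and robbers\<close>

lemma length_game_hist:
  "length (fst (game_hist sc sr t)) = Suc t" "length (snd (game_hist sc sr t)) = Suc t"
  by (induction t) (auto simp: Let_def split: prod.splits)

lemma game_hist_nonempty: "fst (game_hist sc sr t) \<noteq> []" "snd (game_hist sc sr t) \<noteq> []"
  using length_game_hist[of sc sr t] by auto

lemma last_game_hist:
  "last (fst (game_hist sc sr t)) = cop_pos sc sr t" "last (snd (game_hist sc sr t)) = rob_pos sc sr t"
  unfolding cop_pos_def rob_pos_def using length_game_hist[of sc sr t] game_hist_nonempty[of sc sr t]
  by (simp_all add: last_conv_nth)

lemma cop_pos_0: "cop_pos sc sr 0 = sc [] []"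
  by (simp add: cop_pos_def Let_def)

lemma rob_pos_0: "rob_pos sc sr 0 = sr [sc [] []] []"
  by (simp add: rob_pos_def Let_def)

lemma cop_pos_Suc: "cop_pos sc sr (Suc t) = sc (fst (game_hist sc sr t)) (snd (game_hist sc sr t))"
  unfolding last_game_hist(1)[symmetric] by (simp add: Let_def split: prod.splits)

lemma rob_pos_Suc:
  "rob_pos sc sr (Suc t) = sr (fst (game_hist sc sr (Suc t))) (snd (game_hist sc sr t))"
  unfolding last_game_hist(2)[symmetric] by (simp add: Let_def split: prod.splits)

lemma cop_moves:
  assumes legal: "legal_cop_strategy V E m sc"
  shows "valid_config V m (cop_pos sc sr t)"
    and "\<forall>i<m. step_ok E (cop_pos sc sr t i) (cop_pos sc sr (Suc t) i)"
proof -
  have advance: "valid_config V m (cop_pos sc sr (Suc t))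
      \<and> (\<forall>i<m. step_ok E (cop_pos sc sr t i) (cop_pos sc sr (Suc t) i))"
    if valid: "valid_config V m (cop_pos sc sr t)" for t
  proof -
    define Cs Rs where "Cs = fst (game_hist sc sr t)" and "Rs = snd (game_hist sc sr t)"
    have "Cs \<noteq> []" "valid_config V m (last Cs)"
      using game_hist_nonempty(1) valid by (simp_all add: Cs_def last_game_hist)
    then have "valid_config V m (sc Cs Rs) \<and> (\<forall>i<m. step_ok E (last Cs i) (sc Cs Rs i))"
      using legal unfolding legal_cop_strategy_def by blast
    then show ?thesis by (simp add: Cs_def Rs_def cop_pos_Suc last_game_hist)
  qed
  have valid: "valid_config V m (cop_pos sc sr t)" for t
  proof (induction t)
    case 0
    then show ?case using legal by (simp add: legal_cop_strategy_def cop_pos_0)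
  next
    case (Suc t)
    then show ?case using advance by blast
  qed
  show "valid_config V m (cop_pos sc sr t)" by (rule valid)
  show "\<forall>i<m. step_ok E (cop_pos sc sr t i) (cop_pos sc sr (Suc t) i)"
    using advance[OF valid] by blast
qed

lemma robber_moves:
  assumes legal: "legal_robber_strategy V E sr"
  shows "rob_pos sc sr t \<in> V" and "step_ok E (rob_pos sc sr t) (rob_pos sc sr (Suc t))"
proof -
  have advance: "rob_pos sc sr (Suc t) \<in> V \<and> step_ok E (rob_pos sc sr t) (rob_pos sc sr (Suc t))"
    if valid: "rob_pos sc sr t \<in> V" for t
  proof -
    define Cs Rs where "Cs = fst (game_hist sc sr (Suc t))" and "Rs = snd (game_hist sc sr t)"
    have "Rs \<noteq> []" "last Rs \<in> V"
      using game_hist_nonempty(2) valid by (simp_all add: Rs_def last_game_hist)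
    then have "sr Cs Rs \<in> V \<and> step_ok E (last Rs) (sr Cs Rs)"
      using legal unfolding legal_robber_strategy_def by blast
    then show ?thesis by (simp add: Cs_def Rs_def rob_pos_Suc last_game_hist)
  qed
  have valid: "rob_pos sc sr t \<in> V" for t
  proof (induction t)
    case 0
    then show ?case using legal by (simp add: legal_robber_strategy_def rob_pos_0)
  next
    case (Suc t)
    then show ?case using advance by blast
  qed
  show "rob_pos sc sr t \<in> V" by (rule valid)
  show "step_ok E (rob_pos sc sr t) (rob_pos sc sr (Suc t))"
    using advance[OF valid] by blast
qed

definition unguarded :: "'a set \<Rightarrow> ('a \<Rightarrow> 'a \<Rightarrow> bool) \<Rightarrow> nat \<Rightarrow> (nat \<Rightarrow> 'a) \<Rightarrow> 'a set" where
  "unguarded V E m c = {v \<in> V. \<forall>i<m. \<not> step_ok E (c i) v}"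

text \<open>The robber moves to an unguarded vertex whenever possible; the fallbacks only serve
  legality on histories that do not occur.\<close>

definition evasion :: "'a set \<Rightarrow> ('a \<Rightarrow> 'a \<Rightarrow> bool) \<Rightarrow> nat \<Rightarrow> (nat \<Rightarrow> 'a) list \<Rightarrow> 'a list \<Rightarrow> 'a" where
  "evasion V E m Cs Rs =
     (if Rs = [] then
        (if \<exists>v. v \<in> unguarded V E m (last Cs) then SOME v. v \<in> unguarded V E m (last Cs)
         else SOME v. v \<in> V)
      else if \<exists>u. step_ok E (last Rs) u \<and> u \<in> unguarded V E m (last Cs)
      then SOME u. step_ok E (last Rs) u \<and> u \<in> unguarded V E m (last Cs)
      else last Rs)"

lemma evasion_start:
  assumes "\<exists>v. v \<in> unguarded V E m (last Cs)"
  shows "evasion V E m Cs [] \<in> unguarded V E m (last Cs)"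
  using assms someI_ex[OF assms] by (simp add: evasion_def)

lemma evasion_step:
  assumes "Rs \<noteq> []" and ex: "\<exists>u. step_ok E (last Rs) u \<and> u \<in> unguarded V E m (last Cs)"
  shows "step_ok E (last Rs) (evasion V E m Cs Rs) \<and> evasion V E m Cs Rs \<in> unguarded V E m (last Cs)"
proof -
  have "evasion V E m Cs Rs = (SOME u. step_ok E (last Rs) u \<and> u \<in> unguarded V E m (last Cs))"
    using assms unfolding evasion_def by (simp only: if_True if_False)
  then show ?thesis using someI_ex[OF ex] by simp
qed

lemma legal_evasion:
  assumes "V \<noteq> {}"
  shows "legal_robber_strategy V E (evasion V E m)"
  unfolding legal_robber_strategy_def
proof (rule conjI; intro allI impI)
  fix Cs :: "(nat \<Rightarrow> 'a) list"
  show "evasion V E m Cs [] \<in> V"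
  proof (cases "\<exists>v. v \<in> unguarded V E m (last Cs)")
    case True
    then show ?thesis using evasion_start[OF True] by (simp add: unguarded_def)
  next
    case False
    then show ?thesis using assms by (simp add: evasion_def some_in_eq)
  qed
next
  fix Cs :: "(nat \<Rightarrow> 'a) list" and Rs assume Rs: "Rs \<noteq> [] \<and> last Rs \<in> V"
  show "evasion V E m Cs Rs \<in> V \<and> step_ok E (last Rs) (evasion V E m Cs Rs)"
  proof (cases "\<exists>u. step_ok E (last Rs) u \<and> u \<in> unguarded V E m (last Cs)")
    case True
    then show ?thesis using evasion_step[OF _ True] Rs by (simp add: unguarded_def)
  next
    case False
    moreover have "Rs \<noteq> []" using Rs by blast
    ultimately have "evasion V E m Cs Rs = last Rs" unfolding evasion_def by (simp only: if_not_P if_False)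
    then show ?thesis using Rs by (simp add: step_ok_def)
  qed
qed

lemma robber_evades:
  assumes V: "V \<noteq> {}"
    and start: "\<And>c. valid_config V m c \<Longrightarrow> \<exists>v. v \<in> unguarded V E m c"
    and escape: "\<And>c c' r. valid_config V m c \<Longrightarrow> valid_config V m c' \<Longrightarrow>
       (\<forall>i<m. step_ok E (c i) (c' i)) \<Longrightarrow> r \<in> unguarded V E m c \<Longrightarrow>
       \<exists>u. step_ok E r u \<and> u \<in> unguarded V E m c'"
  shows "\<not> cops_win V E m"
proof
  assume "cops_win V E m"
  then obtain sc where legal: "legal_cop_strategy V E m sc"
    and win: "\<And>sr. legal_robber_strategy V E sr \<Longrightarrow> captured m sc sr"
    unfolding cops_win_def by blast
  define sr where "sr = evasion V E m"
  have safe: "rob_pos sc sr t \<in> unguarded V E m (cop_pos sc sr t)" for t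
  proof (induction t)
    case 0
    have "\<exists>v. v \<in> unguarded V E m (last [sc [] []])"
      using start cop_moves(1)[OF legal, of sr 0] by (simp add: cop_pos_0)
    then show ?case using evasion_start by (fastforce simp: cop_pos_0 rob_pos_0 sr_def)
  next
    case (Suc t)
    define Cs Rs where "Cs = fst (game_hist sc sr (Suc t))" and "Rs = snd (game_hist sc sr t)"
    have last: "last Cs = cop_pos sc sr (Suc t)" "last Rs = rob_pos sc sr t" "Rs \<noteq> []"
      unfolding Cs_def Rs_def by (rule last_game_hist game_hist_nonempty)+
    have "\<exists>u. step_ok E (last Rs) u \<and> u \<in> unguarded V E m (last Cs)"
      unfolding last
      by (rule escape[OF cop_moves(1)[OF legal] cop_moves(1)[OF legal] cop_moves(2)[OF legal] Suc])
    then have "sr Cs Rs \<in> unguarded V E m (last Cs)"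
      unfolding sr_def using evasion_step[OF last(3)] by blast
    moreover have "rob_pos sc sr (Suc t) = sr Cs Rs" unfolding Cs_def Rs_def by (rule rob_pos_Suc)
    ultimately show ?case using last(1) by simp
  qed
  have "\<not> captured m sc sr"
  proof
    assume "captured m sc sr"
    then obtain t i where "i < m" and "cop_pos sc sr t i = rob_pos sc sr t \<or> cop_pos sc sr (Suc t) i = rob_pos sc sr t"
      unfolding captured_def by blast
    then have "step_ok E (cop_pos sc sr t i) (rob_pos sc sr t)"
      using cop_moves(2)[OF legal, of sr t] by (auto simp: step_ok_def)
    then show False using safe[of t] \<open>i < m\<close> by (simp add: unguarded_def)
  qed
  then show False using win legal_evasion[OF V] by (simp add: sr_def)
qed

locale girth_at_least_5 =
  fixes V :: "'a set" and E :: "'a \<Rightarrow> 'a \<Rightarrow> bool"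
  assumes simple: "simple_graph V E"
    and triangle_free: "E u v \<Longrightarrow> E v w \<Longrightarrow> \<not> E u w"
    and C4_free: "u \<noteq> w \<Longrightarrow> E u a \<Longrightarrow> E w a \<Longrightarrow> E u b \<Longrightarrow> E w b \<Longrightarrow> a = b"
begin

lemma escape_to_neighbour:
  assumes r: "r \<in> V" and deg: "m < Defs.degree V E r" and free: "\<forall>i<m. c i \<noteq> r"
  shows "\<exists>u. E r u \<and> u \<in> unguarded V E m c"
proof -
  define N where "N = {u \<in> V. E r u}"
  define B where "B i = {u \<in> N. step_ok E (c i) u}" for i
  have fin: "finite N" using simple by (simp add: N_def simple_graph_def)
  \<comment> \<open>a cop at \<open>c i \<noteq> r\<close> guards at most one neighbour of \<open>r\<close>: a second one would close a triangle or a 4-cycle\<close>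
  have one: "card (B i) \<le> 1" if "i < m" for i
  proof -
    have "u1 = u2" if "u1 \<in> B i" "u2 \<in> B i" for u1 u2
    proof (rule ccontr)
      assume "u1 \<noteq> u2"
      moreover have "E r u1" "E r u2" "step_ok E (c i) u1" "step_ok E (c i) u2"
        using that by (auto simp: B_def N_def)
      ultimately show False
        using triangle_free[of r u1 u2] triangle_free[of r u2 u1] C4_free[of r "c i" u1 u2]
          free \<open>i < m\<close> unfolding step_ok_def by fastforce
    qed
    then show ?thesis using fin by (simp add: B_def card_le_Suc0_iff_eq)
  qed
  have "card (\<Union>i<m. B i) \<le> (\<Sum>i<m. card (B i))" by (rule card_UN_le) simp
  also have "\<dots> \<le> m" using one sum_mono[of "{..<m}" "\<lambda>i. card (B i)" "\<lambda>_. 1"] by simp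
  also have "\<dots> < card N" using deg by (simp add: degree_def N_def)
  finally have "card (\<Union>i<m. B i) < card N" .
  moreover have "finite (\<Union>i<m. B i)" using fin by (auto simp: B_def)
  ultimately have "\<not> N \<subseteq> (\<Union>i<m. B i)" using card_mono by (meson le_less_trans less_irrefl)
  then obtain u where "u \<in> N" "u \<notin> (\<Union>i<m. B i)" by blast
  then show ?thesis by (auto simp: N_def B_def unguarded_def)
qed

theorem cops_lose:
  assumes V: "V \<noteq> {}" and min_deg: "\<And>v. v \<in> V \<Longrightarrow> m < Defs.degree V E v"
  shows "\<not> cops_win V E m"
proof (rule robber_evades[OF V])
  fix c assume "valid_config V m c"
  obtain v where v: "v \<in> V" using V by blast
  have "card (c ` {..<m}) < card {u \<in> V. E v u}"
    using card_image_le[of "{..<m}" c] min_deg[OF v] by (simp add: Defs.degree_def)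
  then have "\<not> {u \<in> V. E v u} \<subseteq> c ` {..<m}"
    using card_mono[of "c ` {..<m}"] by (meson finite_imageI finite_lessThan not_le)
  then obtain r where r: "r \<in> V" "r \<notin> c ` {..<m}" by blast
  moreover have "\<forall>i<m. c i \<noteq> r" using r(2) by auto
  ultimately have "\<exists>u. E r u \<and> u \<in> unguarded V E m c"
    using escape_to_neighbour[OF r(1) min_deg[OF r(1)]] by blast
  then show "\<exists>v. v \<in> unguarded V E m c" by blast
next
  fix c c' r assume moves: "\<forall>i<m. step_ok E (c i) (c' i)" and r: "r \<in> unguarded V E m c"
  then have "\<forall>i<m. c' i \<noteq> r" by (auto simp: unguarded_def)
  moreover have "r \<in> V" using r by (simp add: unguarded_def)
  ultimately have "\<exists>u. E r u \<and> u \<in> unguarded V E m c'"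
    using escape_to_neighbour min_deg by blast
  then show "\<exists>u. step_ok E r u \<and> u \<in> unguarded V E m c'" by (auto simp: step_ok_def)
qed

end

lemma cop_number_between:
  assumes "cops_win V E n" and "\<And>m. m < s \<Longrightarrow> \<not> cops_win V E m"
  shows "s \<le> cop_number V E" and "cop_number V E \<le> n"
proof -
  show "cop_number V E \<le> n" unfolding cop_number_def using assms(1) by (rule Least_le)
  have "cops_win V E (cop_number V E)" unfolding cop_number_def using assms(1) by (rule LeastI)
  then show "s \<le> cop_number V E" using assms(2) not_less by blast
qed

definition chase_step :: "('a \<Rightarrow> 'a \<Rightarrow> bool) \<Rightarrow> 'a \<Rightarrow> 'a \<Rightarrow> 'a" where
  "chase_step E c r =
     (if step_ok E c r then r else if \<exists>w. E c w \<and> E w r then SOME w. E c w \<and> E w r else c)"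

definition chase_strategy ::
    "('a \<Rightarrow> 'a \<Rightarrow> bool) \<Rightarrow> (nat \<Rightarrow> 'a) \<Rightarrow> (nat \<Rightarrow> 'a) list \<Rightarrow> 'a list \<Rightarrow> (nat \<Rightarrow> 'a)" where
  "chase_strategy E c0 Cs Rs = (if Cs = [] then c0 else (\<lambda>i. chase_step E (last Cs i) (last Rs)))"

lemma chase_step_catches: "step_ok E c r \<Longrightarrow> chase_step E c r = r"
  by (simp add: chase_step_def)

lemma chase_step_common_neighbour:
  assumes "\<not> step_ok E c r" and "E c w" and "E w r"
  shows "E c (chase_step E c r) \<and> E (chase_step E c r) r"
  using assms someI[of "\<lambda>w. E c w \<and> E w r" w] by (auto simp: chase_step_def)

lemma chase_step_ok:
  assumes G: "simple_graph V E" and c: "c \<in> V"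
  shows "chase_step E c r \<in> V \<and> step_ok E c (chase_step E c r)"
proof (cases "step_ok E c r")
  case True
  moreover have "r \<in> V" using True c G by (auto simp: step_ok_def simple_graph_def)
  ultimately show ?thesis by (simp add: chase_step_catches)
next
  case no_step: False
  show ?thesis
  proof (cases "\<exists>w. E c w \<and> E w r")
    case True
    then obtain w where "E c w" "E w r" by blast
    then have "E c (chase_step E c r)" by (rule chase_step_common_neighbour[OF no_step, THEN conjunct1])
    moreover have "chase_step E c r \<in> V" using calculation G by (simp add: simple_graph_def)
    ultimately show ?thesis by (simp add: step_ok_def)
  next
    case False
    then have "chase_step E c r = c" using no_step by (auto simp: chase_step_def)
    then show ?thesis using c by (simp add: step_ok_def)
  qed
qed

lemma legal_chase_strategy:
  "simple_graph V E \<Longrightarrow> valid_config V m c0 \<Longrightarrow> legal_cop_strategy V E m (chase_strategy E c0)"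
  by (auto simp: legal_cop_strategy_def chase_strategy_def valid_config_def chase_step_ok)

lemma cop_pos_chase:
  "cop_pos (chase_strategy E c0) sr 0 = c0"
  "cop_pos (chase_strategy E c0) sr (Suc t) i =
     chase_step E (cop_pos (chase_strategy E c0) sr t i) (rob_pos (chase_strategy E c0) sr t)"
  by (simp_all add: cop_pos_0 cop_pos_Suc chase_strategy_def last_game_hist game_hist_nonempty)

section \<open>Partial biaffine planes\<close>

locale partial_biaffine_plane =
  fixes q s :: nat and g :: "nat \<Rightarrow> nat \<Rightarrow> nat \<Rightarrow> nat"
  assumes lines: "line_system {..<q} g" and two_le_s: "2 \<le> s" and s_le_q: "s \<le> q"
begin

lemma line_value_lt: "m < q \<Longrightarrow> x < q \<Longrightarrow> b < q \<Longrightarrow> g m x b < q"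
  using lines by (simp add: line_system_def)

lemma unique_intercept: "m < q \<Longrightarrow> x < q \<Longrightarrow> y < q \<Longrightarrow> \<exists>!b. b < q \<and> g m x b = y"
  using lines by (simp add: line_system_def)

lemma unique_meet:
  "m < q \<Longrightarrow> m' < q \<Longrightarrow> m \<noteq> m' \<Longrightarrow> b < q \<Longrightarrow> b' < q \<Longrightarrow> \<exists>!x. x < q \<and> g m x b = g m' x b'"
  using lines by (simp add: line_system_def)

lemma q_pos: "q > 0"
  using two_le_s s_le_q by simp

definition point :: "nat \<Rightarrow> nat \<Rightarrow> nat" where
  "point x y = x * q + y"

definition line :: "nat \<Rightarrow> nat \<Rightarrow> nat" where
  "line m b = q * q + point m b"

definition vertices :: "nat set" where
  "vertices = {..< q * q + s * q}"

definition incident :: "nat \<Rightarrow> nat \<Rightarrow> bool" where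
  "incident u v \<longleftrightarrow> (\<exists>x<q. \<exists>m<s. \<exists>b<q.
      u = point x (g m x b) \<and> v = line m b \<or> u = line m b \<and> v = point x (g m x b))"

lemma card_vertices: "card vertices = q * q + s * q"
  by (simp add: vertices_def)

lemma point_lt: "x < q \<Longrightarrow> y < q \<Longrightarrow> point x y < q * q"
proof -
  assume "x < q" "y < q"
  then have "x * q + y < Suc x * q" by simp
  also have "\<dots> \<le> q * q" using \<open>x < q\<close> by (intro mult_le_mono1) simp
  finally show ?thesis by (simp add: point_def)
qed

lemma point_in_vertices: "x < q \<Longrightarrow> y < q \<Longrightarrow> point x y \<in> vertices"
  using point_lt by (fastforce simp: vertices_def)

lemma line_in_vertices: "m < s \<Longrightarrow> b < q \<Longrightarrow> line m b \<in> vertices"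
proof -
  assume "m < s" "b < q"
  then have "m * q + b < Suc m * q" by simp
  also have "\<dots> \<le> s * q" using \<open>m < s\<close> by (intro mult_le_mono1) simp
  finally show ?thesis by (simp add: line_def point_def vertices_def)
qed

lemma point_eq_iff:
  assumes "y < q" "y' < q"
  shows "point x y = point x' y' \<longleftrightarrow> x = x' \<and> y = y'"
proof -
  have "point x y div q = x" "point x y mod q = y" "point x' y' div q = x'" "point x' y' mod q = y'"
    using assms by (simp_all add: point_def)
  then show ?thesis by metis
qed

lemma line_eq_iff: "b < q \<Longrightarrow> b' < q \<Longrightarrow> line m b = line m' b' \<longleftrightarrow> m = m' \<and> b = b'"
  by (simp add: line_def point_eq_iff)

lemma point_ne_line: "x < q \<Longrightarrow> y < q \<Longrightarrow> point x y \<noteq> line m b"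
  using point_lt by (fastforce simp: line_def)

lemma vertex_cases:
  assumes "v \<in> vertices"
  obtains (point) x y where "x < q" "y < q" "v = point x y"
    | (line) m b where "m < s" "b < q" "v = line m b"
proof (cases "v < q * q")
  case True
  then have "v div q < q" "v mod q < q" using q_pos by (simp_all add: div_less_iff_less_mult)
  then show ?thesis using point[of "v div q" "v mod q"] by (simp add: point_def)
next
  case False
  define w where "w = v - q * q"
  have "w < s * q" using assms False by (simp add: vertices_def w_def)
  then have "w div q < s" "w mod q < q" using q_pos by (simp_all add: div_less_iff_less_mult)
  moreover have "v = line (w div q) (w mod q)" using False by (simp add: line_def point_def w_def)
  ultimately show ?thesis using line by blast
qed

lemma incident_cases:
  assumes "incident u v"
  obtains x m b where "x < q" "m < s" "b < q"
    "u = point x (g m x b) \<and> v = line m b \<or> u = line m b \<and> v = point x (g m x b)"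
  using assms unfolding incident_def by blast

lemma incident_point_line:
  assumes "x < q" "y < q" "m < s" "b < q"
  shows "incident (point x y) (line m b) \<longleftrightarrow> g m x b = y"
proof
  assume "incident (point x y) (line m b)"
  then obtain x' m' b' where "x' < q" "m' < s" "b' < q"
    and "point x y = point x' (g m' x' b') \<and> line m b = line m' b'
      \<or> point x y = line m' b' \<and> line m b = point x' (g m' x' b')"
    by (rule incident_cases)
  moreover have "point x y \<noteq> line m' b'" using assms point_ne_line by blast
  ultimately show "g m x b = y"
    using assms line_value_lt[of m' x' b'] s_le_q by (auto simp: point_eq_iff line_eq_iff)
next
  assume "g m x b = y"
  then show "incident (point x y) (line m b)" unfolding incident_def using assms by blast
qed

lemma incident_sym: "incident u v \<Longrightarrow> incident v u"
  unfolding incident_def by blast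

lemma incident_line_point:
  "x < q \<Longrightarrow> y < q \<Longrightarrow> m < s \<Longrightarrow> b < q \<Longrightarrow> incident (line m b) (point x y) \<longleftrightarrow> g m x b = y"
  using incident_point_line[of x y m b] incident_sym[of "line m b" "point x y"]
    incident_sym[of "point x y" "line m b"] by blast

lemma incident_in_vertices: "incident u v \<Longrightarrow> u \<in> vertices \<and> v \<in> vertices"
  by (elim incident_cases)
    (use point_in_vertices line_in_vertices line_value_lt s_le_q in \<open>auto intro: less_le_trans\<close>)

lemma incident_bipartite: "incident u v \<Longrightarrow> u < q * q \<longleftrightarrow> \<not> v < q * q"
  by (elim incident_cases)
    (use point_lt line_value_lt s_le_q in \<open>auto simp: line_def intro: less_le_trans\<close>)

lemma not_incident_points: "x < q \<Longrightarrow> y < q \<Longrightarrow> x' < q \<Longrightarrow> y' < q \<Longrightarrow> \<not> incident (point x y) (point x' y')"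
  using incident_bipartite point_lt by blast

lemma not_incident_lines: "\<not> incident (line m b) (line m' b')"
  using incident_bipartite by (fastforce simp: line_def)

lemma simple_graph_incident: "simple_graph vertices incident"
  unfolding simple_graph_def using incident_in_vertices incident_sym incident_bipartite[of u u for u]
  by (auto simp: vertices_def)

definition intercept :: "nat \<Rightarrow> nat \<Rightarrow> nat \<Rightarrow> nat" where
  "intercept m x y = (THE b. b < q \<and> g m x b = y)"

lemma intercept:
  assumes "m < q" "x < q" "y < q"
  shows "intercept m x y < q \<and> g m x (intercept m x y) = y"
  unfolding intercept_def using unique_intercept[OF assms] by (rule theI')

lemma intercept_unique:
  assumes "m < q" "x < q" "b < q"
  shows "intercept m x (g m x b) = b"
  unfolding intercept_def using unique_intercept[OF assms(1,2) line_value_lt[OF assms]]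
  by (rule the1_equality) (simp add: assms)

lemma neighbours_point:
  assumes "x < q" "y < q"
  shows "{v \<in> vertices. incident (point x y) v} = (\<lambda>m. line m (intercept m x y)) ` {..<s}"
proof (intro equalityI subsetI)
  fix v assume "v \<in> {v \<in> vertices. incident (point x y) v}"
  then have "v \<in> vertices" "incident (point x y) v" by auto
  then show "v \<in> (\<lambda>m. line m (intercept m x y)) ` {..<s}"
  proof (cases rule: vertex_cases)
    case (point x' y')
    then show ?thesis using \<open>incident (point x y) v\<close> assms incident_bipartite point_lt by blast
  next
    case (line m b)
    then have "g m x b = y" using \<open>incident (point x y) v\<close> assms incident_point_line by blast
    then have "b = intercept m x y" using line assms intercept_unique s_le_q by force
    then show ?thesis using line by blast
  qed
next
  fix v assume "v \<in> (\<lambda>m. line m (intercept m x y)) ` {..<s}"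
  then obtain m where m: "m < s" and v: "v = line m (intercept m x y)" by blast
  then have "intercept m x y < q" "g m x (intercept m x y) = y"
    using intercept[of m x y] assms s_le_q by simp_all
  then show "v \<in> {v \<in> vertices. incident (point x y) v}"
    using assms m v incident_point_line line_in_vertices by simp
qed

lemma degree_point:
  assumes "x < q" "y < q"
  shows "Defs.degree vertices incident (point x y) = s"
proof -
  have "inj_on (\<lambda>m. line m (intercept m x y)) {..<s}"
  proof (rule inj_onI)
    fix m m' assume "m \<in> {..<s}" "m' \<in> {..<s}" "line m (intercept m x y) = line m' (intercept m' x y)"
    moreover have "m < q" "m' < q" using \<open>m \<in> {..<s}\<close> \<open>m' \<in> {..<s}\<close> s_le_q by auto
    ultimately show "m = m'" using intercept[of m x y] intercept[of m' x y] assms by (simp add: line_eq_iff)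
  qed
  then show ?thesis unfolding degree_def neighbours_point[OF assms] by (simp add: card_image)
qed

lemma neighbours_line:
  assumes "m < s" "b < q"
  shows "{v \<in> vertices. incident (line m b) v} = (\<lambda>x. point x (g m x b)) ` {..<q}"
proof (intro equalityI subsetI)
  fix v assume "v \<in> {v \<in> vertices. incident (line m b) v}"
  then have "v \<in> vertices" "incident (line m b) v" by auto
  then show "v \<in> (\<lambda>x. point x (g m x b)) ` {..<q}"
  proof (cases rule: vertex_cases)
    case (point x y)
    then have "g m x b = y" using \<open>incident (line m b) v\<close> assms incident_line_point by blast
    then show ?thesis using point by blast
  next
    case (line m' b')
    then show ?thesis
      using \<open>incident (line m b) v\<close> incident_bipartite[of "line m b" v] by (simp add: line_def)
  qed
next
  fix v assume "v \<in> (\<lambda>x. point x (g m x b)) ` {..<q}"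
  then obtain x where x: "x < q" and v: "v = point x (g m x b)" by blast
  then have "g m x b < q" using line_value_lt assms s_le_q by simp
  then show "v \<in> {v \<in> vertices. incident (line m b) v}"
    using assms x v incident_line_point point_in_vertices by simp
qed

lemma degree_line:
  assumes "m < s" "b < q"
  shows "Defs.degree vertices incident (line m b) = q"
proof -
  have "inj_on (\<lambda>x. point x (g m x b)) {..<q}"
  proof (rule inj_onI)
    fix x x' assume "x \<in> {..<q}" "x' \<in> {..<q}" "point x (g m x b) = point x' (g m x' b)"
    then show "x = x'" using line_value_lt[of m x b] line_value_lt[of m x' b] assms s_le_q
      by (simp add: point_eq_iff)
  qed
  then show ?thesis unfolding degree_def neighbours_line[OF assms] by (simp add: card_image)
qed

lemma degree_vertex:
  assumes "v \<in> vertices"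
  shows "Defs.degree vertices incident v = s \<or> Defs.degree vertices incident v = q"
  using assms by (cases rule: vertex_cases) (simp_all add: degree_point degree_line)

lemma lines_meet_at_most_once:
  assumes "m < s" "m' < s" "b < q" "b' < q" "(m, b) \<noteq> (m', b')" "x < q" "x' < q"
    and "g m x b = g m' x b'" "g m x' b = g m' x' b'"
  shows "x = x'"
proof (cases "m = m'")
  case True
  then have "b = b'"
    using assms intercept_unique[of m x b] intercept_unique[of m x b'] s_le_q by simp
  then show ?thesis using True assms by simp
next
  case False
  then show ?thesis using unique_meet[of m m' b b'] assms s_le_q by auto
qed

lemma common_neighbour_unique:
  assumes "u \<noteq> w" "incident u a" "incident w a" "incident u c" "incident w c"
  shows "a = c"
proof -
  have vs: "u \<in> vertices" "w \<in> vertices" "a \<in> vertices" "c \<in> vertices"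
    using assms incident_in_vertices by blast+
  \<comment> \<open>both cases reduce to two distinct lines sharing at most one point\<close>
  have points_lines: "x = x'" if "x < q" "x' < q" "m < s" "m' < s" "b < q" "b' < q" "(m, b) \<noteq> (m', b')"
    "incident (point x y) (line m b)" "incident (point x y) (line m' b')"
    "incident (point x' y') (line m b)" "incident (point x' y') (line m' b')" "y < q" "y' < q"
    for x y x' y' m b m' b'
    using that lines_meet_at_most_once[of m m' b b' x x'] incident_point_line by simp
  show ?thesis
  using vs(1)
  proof (cases rule: vertex_cases)
    case u: (point x y)
    obtain m b where a: "m < s" "b < q" "a = line m b"
      using vs(3) assms(2) u not_incident_points by (cases rule: vertex_cases) auto
    obtain m' b' where c: "m' < s" "b' < q" "c = line m' b'"
      using vs(4) assms(4) u not_incident_points by (cases rule: vertex_cases) auto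
    obtain x' y' where w: "x' < q" "y' < q" "w = point x' y'"
      using vs(2) assms(3) a not_incident_lines by (cases rule: vertex_cases) auto
    show ?thesis
    proof (rule ccontr)
      assume "a \<noteq> c"
      then have "x = x'" using points_lines[of x x' m m' b b' y y'] assms u a c w by auto
      then show False using assms u w incident_point_line a by auto
    qed
  next
    case u: (line m b)
    obtain x y where a: "x < q" "y < q" "a = point x y"
      using vs(3) assms(2) u not_incident_lines by (cases rule: vertex_cases) auto
    obtain x' y' where c: "x' < q" "y' < q" "c = point x' y'"
      using vs(4) assms(4) u not_incident_lines by (cases rule: vertex_cases) auto
    obtain m' b' where w: "m' < s" "b' < q" "w = line m' b'"
      using vs(2) assms(3) a not_incident_points by (cases rule: vertex_cases) auto
    have "x = x'"
      using points_lines[of x x' m m' b b' y y'] assms u a c w incident_sym by auto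
    then show ?thesis
      using assms u a c incident_line_point by auto
  qed
qed

lemma lines_common_point:
  assumes "m < s" "m' < s" "m \<noteq> m'" "b < q" "b' < q"
  shows "\<exists>p. incident (line m b) p \<and> incident p (line m' b')"
proof -
  obtain x where x: "x < q" "g m x b = g m' x b'" using unique_meet[of m m' b b'] assms s_le_q by auto
  then have "g m x b < q" using line_value_lt assms s_le_q by simp
  then show ?thesis using x assms incident_line_point incident_point_line by metis
qed

sublocale girth_at_least_5 vertices incident
proof
  show "simple_graph vertices incident" by (rule simple_graph_incident)
  show "\<not> incident u w" if "incident u v" "incident v w" for u v w
    using that incident_bipartite by blast
  show "a = b" if "u \<noteq> w" "incident u a" "incident w a" "incident u b" "incident w b" for u w a b
    using that by (rule common_neighbour_unique)
qed

lemma connected_graph_incident: "connected_graph vertices incident"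
proof -
  have s: "0 < s" "1 < s" and q: "0 < q" using two_le_s q_pos by auto
  let ?reach = "incident\<^sup>*\<^sup>*"
  have two_steps: "?reach u w" if "incident u v" "incident v w" for u v w
    using that by (meson r_into_rtranclp rtranclp.rtrancl_into_rtrancl)
  have line_to_line: "?reach (line m b) (line m' b')"
    if "m < s" "m' < s" "m \<noteq> m'" "b < q" "b' < q" for m m' b b'
    using lines_common_point[OF that] two_steps by blast
  have slope_0: "?reach (line 0 b) (line 0 0)" if "b < q" for b
  proof -
    have "?reach (line 0 b) (line 1 0)" by (rule line_to_line) (use s q that in auto)
    moreover have "?reach (line 1 0) (line 0 0)" by (rule line_to_line) (use s q in auto)
    ultimately show ?thesis by (rule rtranclp_trans)
  qed
  have from_point: "?reach (point x y) (line 0 0)" if "x < q" "y < q" for x y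
  proof -
    have "incident (point x y) (line 0 (intercept 0 x y))"
      using that intercept[of 0 x y] q s incident_point_line by simp
    then show ?thesis using slope_0[of "intercept 0 x y"] intercept[of 0 x y] that q
      by (meson converse_rtranclp_into_rtranclp)
  qed
  have to_hub: "?reach v (line 0 0)" if "v \<in> vertices" for v
    using that
  proof (cases rule: vertex_cases)
    case (point x y)
    then show ?thesis using from_point by simp
  next
    case (line m b)
    then have "incident (line m b) (point 0 (g m 0 b))" "g m 0 b < q"
      using incident_line_point line_value_lt q s_le_q by simp_all
    then show ?thesis using from_point[of 0 "g m 0 b"] q line by (meson converse_rtranclp_into_rtranclp)
  qed
  have "symp ?reach" using incident_sym by (intro symp_rtranclp) (simp add: symp_def)
  then have "?reach u v" if "u \<in> vertices" "v \<in> vertices" for u v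
    using to_hub[OF that(1)] to_hub[OF that(2)] by (meson rtranclp_trans sympD)
  moreover have "vertices \<noteq> {}" using line_in_vertices[of 0 0] s q by auto
  ultimately show ?thesis unfolding connected_graph_def by blast
qed

lemma chase_step_towards_line:
  assumes "0 < m" "m < s" "b < q" "i < q"
  defines "p \<equiv> chase_step incident (line 0 i) (line m b)"
  shows "incident (line 0 i) p \<and> incident p (line m b)"
proof -
  have "\<not> step_ok incident (line 0 i) (line m b)"
    using assms not_incident_lines by (simp add: step_ok_def line_eq_iff)
  moreover obtain w where "incident (line 0 i) w" "incident w (line m b)"
    using lines_common_point[of 0 m i b] assms s_le_q by auto
  ultimately show ?thesis unfolding p_def by (rule chase_step_common_neighbour)
qed

lemma horizontal_line_through:
  assumes "x < q" "y < q"
  shows "intercept 0 x y < q \<and> incident (line 0 (intercept 0 x y)) (point x y)"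
  using assms intercept[of 0 x y] q_pos two_le_s incident_line_point by simp

text \<open>Cops start on the \<open>q\<close> lines of slope 0, one through each point. A robber on a line of
  another slope sees every cop move to the intersection with his line; after his move, the cop
  whose line passes through his new point is already there.\<close>

lemma chase_catches_robber_on_sloped_line:
  assumes robber: "legal_robber_strategy vertices incident sr"
    and start: "rob_pos (chase_strategy incident (line 0)) sr 0 = line m b"
    and m: "0 < m" "m < s" and b: "b < q"
  shows "captured q (chase_strategy incident (line 0)) sr"
proof -
  define sc where "sc = chase_strategy incident (line 0)"
  let ?cp = "cop_pos sc sr" and ?rp = "rob_pos sc sr"
  have cp0: "?cp 0 = line 0" and cp_Suc: "?cp (Suc t) i = chase_step incident (?cp t i) (?rp t)" for t i
    unfolding sc_def by (rule cop_pos_chase)+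
  have r0: "?rp 0 = line m b" using start by (simp add: sc_def)
  have cp1: "incident (line 0 i) (?cp 1 i) \<and> incident (?cp 1 i) (?rp 0)" if "i < q" for i
    using chase_step_towards_line[OF m b that] cp_Suc[of 0 i] cp0 r0 by simp
  have r1: "?rp 1 \<in> vertices" "step_ok incident (?rp 0) (?rp 1)" using robber_moves[OF robber] by auto
  have "captured q sc sr"
  proof (cases "?rp 1 = ?rp 0")
    case True
    then have "?cp 2 0 = ?rp 1"
      using cp1[OF q_pos] cp_Suc[of 1 0] by (simp add: numeral_2_eq_2 chase_step_catches step_ok_def)
    then show ?thesis using q_pos unfolding captured_def by (metis numeral_2_eq_2 One_nat_def)
  next
    case False
    then have e: "incident (?rp 0) (?rp 1)" using r1(2) by (simp add: step_ok_def)
    obtain x y where xy: "x < q" "y < q" "?rp 1 = point x y"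
      using r1(1) e r0 not_incident_lines by (cases rule: vertex_cases) auto
    define i where "i = intercept 0 x y"
    have i: "i < q" "incident (line 0 i) (?rp 1)"
      using horizontal_line_through[OF xy(1,2)] xy(3) by (simp_all add: i_def)
    have "line 0 i \<noteq> ?rp 0" using r0 m i(1) b by (simp add: line_eq_iff)
    then have "?cp 1 i = ?rp 1"
      using common_neighbour_unique[of "line 0 i" "?rp 0" "?cp 1 i" "?rp 1"] cp1[OF i(1)] i(2) e
        incident_sym by blast
    then show ?thesis using i(1) unfolding captured_def by blast
  qed
  then show ?thesis by (simp add: sc_def)
qed

lemma chase_from_horizontal_lines_captures:
  assumes robber: "legal_robber_strategy vertices incident sr"
  shows "captured q (chase_strategy incident (line 0)) sr"
proof -
  define sc where "sc = chase_strategy incident (line 0)"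
  let ?cp = "cop_pos sc sr" and ?rp = "rob_pos sc sr"
  have cp0: "?cp 0 = line 0" and cp_Suc: "?cp (Suc t) i = chase_step incident (?cp t i) (?rp t)" for t i
    unfolding sc_def by (rule cop_pos_chase)+
  have "?rp 0 \<in> vertices" using robber_moves(1)[OF robber] .
  then have "captured q sc sr"
  proof (cases rule: vertex_cases)
    case (point x y)
    define i where "i = intercept 0 x y"
    have i: "i < q" "incident (line 0 i) (?rp 0)"
      using horizontal_line_through[OF point(1,2)] point(3) by (simp_all add: i_def)
    then have "?cp 1 i = ?rp 0" using cp_Suc[of 0 i] cp0 by (simp add: chase_step_catches step_ok_def)
    then show ?thesis using i(1) unfolding captured_def by (metis One_nat_def)
  next
    case (line m b)
    show ?thesis
    proof (cases "m = 0")
      case True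
      then have "?cp 0 b = ?rp 0" using line cp0 by simp
      then show ?thesis using line s_le_q unfolding captured_def by (meson less_le_trans)
    next
      case False
      then show ?thesis
        using chase_catches_robber_on_sloped_line[OF robber] line unfolding sc_def by simp
    qed
  qed
  then show ?thesis by (simp add: sc_def)
qed

lemma horizontal_cops_win: "cops_win vertices incident q"
  unfolding cops_win_def
proof (intro exI conjI allI impI)
  show "legal_cop_strategy vertices incident q (chase_strategy incident (line 0))"
    using simple_graph_incident line_in_vertices two_le_s by (intro legal_chase_strategy) (auto simp: valid_config_def)
  show "captured q (chase_strategy incident (line 0)) sr"
    if "legal_robber_strategy vertices incident sr" for sr
    using that by (rule chase_from_horizontal_lines_captures)
qed

theorem cop_number_bounds: "s \<le> cop_number vertices incident" "cop_number vertices incident \<le> q"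
proof -
  have "vertices \<noteq> {}" using line_in_vertices[of 0 0] two_le_s q_pos by auto
  moreover have "m < Defs.degree vertices incident v" if "m < s" "v \<in> vertices" for m v
    using degree_vertex[OF that(2)] that s_le_q by auto
  ultimately have "\<not> cops_win vertices incident m" if "m < s" for m
    using cops_lose that by blast
  then show "s \<le> cop_number vertices incident" "cop_number vertices incident \<le> q"
    using cop_number_between[OF horizontal_cops_win] by blast+
qed

end

lemma incidence_graph_for_prime_power:
  assumes q: "primepow q" and k: "0 < k" "k < q"
  shows "\<exists>(V :: nat set) E. simple_graph V E \<and> connected_graph V E \<and>
    int (card V) = 2 * int q ^ 2 + (1 - int k) * int q \<and>
    (\<forall>v\<in>V. int (Defs.degree V E v) = int q + 1 - int k \<or> Defs.degree V E v = q) \<and>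
    int q + 1 - int k \<le> int (cop_number V E) \<and> cop_number V E \<le> q"
proof -
  have s: "2 \<le> q + 1 - k" "q + 1 - k \<le> q" and s_int: "int (q + 1 - k) = int q + 1 - int k"
    using k by auto
  obtain g where "line_system {..<q} g" using prime_power_line_system[OF q] by blast
  then interpret P: partial_biaffine_plane q "q + 1 - k" g using s by unfold_locales
  show ?thesis
  proof (intro exI conjI)
    show "int (card P.vertices) = 2 * int q ^ 2 + (1 - int k) * int q"
      unfolding P.card_vertices of_nat_add of_nat_mult s_int by (simp add: power2_eq_square algebra_simps)
    show "\<forall>v\<in>P.vertices. int (Defs.degree P.vertices P.incident v) = int q + 1 - int k
        \<or> Defs.degree P.vertices P.incident v = q"
      using P.degree_vertex s_int by metis
    show "int q + 1 - int k \<le> int (cop_number P.vertices P.incident)"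
      using P.cop_number_bounds(1) s_int by linarith
  qed (use P.simple_graph_incident P.connected_graph_incident P.cop_number_bounds(2) in auto)
qed

theorem theorem12:
  fixes k :: "nat \<Rightarrow> nat"
  assumes kpos: "\<And>q. primepow q \<Longrightarrow> k q > 0"
    and ko: "\<forall>\<epsilon>>0. \<exists>N. \<forall>q\<ge>N. primepow q \<longrightarrow> real (k q) / real q < \<epsilon>"
  shows "\<exists>N. \<forall>q\<ge>N. primepow q \<longrightarrow>
           (\<exists>(V :: nat set) E. simple_graph V E \<and> connected_graph V E \<and>
              int (card V) = 2 * int q ^ 2 + (1 - int (k q)) * int q \<and>
              (\<forall>v\<in>V. int (Defs.degree V E v) = int q + 1 - int (k q) \<or> Defs.degree V E v = q) \<and>
              int q + 1 - int (k q) \<le> int (cop_number V E) \<and> cop_number V E \<le> q)"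
proof -
  obtain N where N: "\<forall>q\<ge>N. primepow q \<longrightarrow> real (k q) / real q < 1"
    using ko zero_less_one by blast
  have "k q < q" if "q \<ge> N" "primepow q" for q
  proof -
    have "real (k q) / real q < 1" using N that by blast
    then show ?thesis using primepow_gt_0_nat[OF that(2)] by (simp add: divide_less_eq)
  qed
  then show ?thesis using incidence_graph_for_prime_power kpos by blast
qed

end
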